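(* Let $n_1>n_2>n_3\geq 2$ be integers. Let $X$ be the set of the following vectors of length $4$: $(j,j,j,0),(j,j,j,1)$ for $j\in\{1,\ldots,n_3\}$; $(n_3+k,n_3+k,1,0),(n_3+k,n_3+k,n_3,1)$ for $k\in\{0,\ldots,n_2-n_3-1\}$; $(n_2+k,1,1,0),(n_2+k,n_2,n_3,1)$ for $k\in\{0,\ldots,n_1-n_2-1\}$; and $(n_1,n_2,n_3,1)$. Let $\mathcal B$ consist of all $3$-element subsets $\{\alpha_1,\alpha_2,\alpha_3\}\subseteq X$ such that for each coordinate $j\in\{1,2,3,4\}$ the set $\{\alpha_{1(j)},\alpha_{2(j)},\alpha_{3(j)}\}$ has exactly $2$ elements, together with the additional triple $\{(1,1,1,0),(n_3,n_3,1,0),(n_3,n_3,n_3,0)\}$. Then the $3$-uniform bi-hypergraph $\mathcal H_{n_1,n_2,n_3}=(X,\mathcal B)$ is a one-realization of $\{n_1,n_2,n_3\}$.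
   Context: A bi-hypergraph $(X,\mathcal B)$ is a mixed hypergraph whose $\mathcal C$-edges and $\mathcal D$-edges both equal $\mathcal B$. A strict $k$-coloring is a partition of $X$ into exactly $k$ nonempty classes such that every edge of $\mathcal B$ contains two vertices of a common class and two vertices of distinct classes. The feasible set is the set of $k$ admitting a strict $k$-coloring; the chromatic spectrum lists, for $k=1,\ldots,\max$ of the feasible set, the number of strict $k$-colorings (as partitions). A one-realization of a set $S$ is a mixed hypergraph whose feasible set is $S$ and whose chromatic spectrum has all entries in $\{0,1\}$. $\alpha_{l(j)}$ denotes the $j$-th entry of $\alpha_l$. *)

theory Defs
  imports Main "HOL-Library.Disjoint_Sets"
begin

definition strict_coloring :: "'a set \<Rightarrow> 'a set set \<Rightarrow> 'a set set \<Rightarrow> 'a set set \<Rightarrow> bool" where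
  "strict_coloring X C D P \<longleftrightarrow>
     partition_on X P \<and>
     (\<forall>e\<in>C. \<exists>c\<in>P. \<exists>x\<in>e. \<exists>y\<in>e. x \<noteq> y \<and> x \<in> c \<and> y \<in> c) \<and>
     (\<forall>e\<in>D. \<exists>c\<in>P. \<exists>x\<in>e. \<exists>y\<in>e. x \<in> c \<and> y \<notin> c)"

definition feasible_set :: "'a set \<Rightarrow> 'a set set \<Rightarrow> 'a set set \<Rightarrow> nat set" where
  "feasible_set X C D = {k. \<exists>P. strict_coloring X C D P \<and> card P = k}"

definition spectrum_entry :: "'a set \<Rightarrow> 'a set set \<Rightarrow> 'a set set \<Rightarrow> nat \<Rightarrow> nat" where
  "spectrum_entry X C D k = card {P. strict_coloring X C D P \<and> card P = k}"

definition one_realization :: "nat set \<Rightarrow> 'a set \<Rightarrow> 'a set set \<Rightarrow> 'a set set \<Rightarrow> bool" where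
  "one_realization S X C D \<longleftrightarrow>
     feasible_set X C D = S \<and>
     (\<forall>k\<in>{1..Max (feasible_set X C D)}. spectrum_entry X C D k \<in> {0, 1})"

type_synonym vec4 = "nat \<times> nat \<times> nat \<times> nat"

fun coord :: "vec4 \<Rightarrow> nat \<Rightarrow> nat" where
  "coord (a, b, c, d) j = (if j = 1 then a else if j = 2 then b else if j = 3 then c else d)"

definition HX :: "nat \<Rightarrow> nat \<Rightarrow> nat \<Rightarrow> vec4 set" where
  "HX n1 n2 n3 =
     {(j, j, j, 0) | j. j \<in> {1..n3}} \<union> {(j, j, j, 1) | j. j \<in> {1..n3}} \<union>
     {(n3 + k, n3 + k, 1, 0) | k. k < n2 - n3} \<union> {(n3 + k, n3 + k, n3, 1) | k. k < n2 - n3} \<union>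
     {(n2 + k, 1, 1, 0) | k. k < n1 - n2} \<union> {(n2 + k, n2, n3, 1) | k. k < n1 - n2} \<union>
     {(n1, n2, n3, 1)}"

definition HB :: "nat \<Rightarrow> nat \<Rightarrow> nat \<Rightarrow> vec4 set set" where
  "HB n1 n2 n3 =
     {e. e \<subseteq> HX n1 n2 n3 \<and> card e = 3 \<and> (\<forall>j\<in>{1..4}. card ((\<lambda>a. coord a j) ` e) = 2)} \<union>
     {{(1, 1, 1, 0), (n3, n3, 1, 0), (n3, n3, n3, 0)}}"

end

theory Submission
  imports Defs
begin

(*
  In a strict coloring of a 3-uniform bi-hypergraph every edge has exactly two vertices in a
  common block. Applied to the edges {(j,j,j,0), (j,j,j,1), x}, this forces (j,j,j,0) and
  (j,j,j,1) into one block for all j (the extra edge excludes the alternative) and keeps the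
  blocks of different j apart. The vertex (n3,n3,1,0) then joins the block of j = 1 or of j = n3.
  In the first case the coloring is the partition by the third coordinate. In the second the
  pairs (v,v,1,0), (v,v,n3,1) are glued, and the pairs (v,1,1,0), (v,n2,n3,1) with v \<ge> n2 are
  either all glued, giving the partition by the first coordinate, or all split, giving the
  partition by the second. Conversely these three partitions are strict colorings with n1, n2
  and n3 blocks.
*)

definition same_block :: "'a set set \<Rightarrow> 'a \<Rightarrow> 'a \<Rightarrow> bool" where
  "same_block P x y \<longleftrightarrow> (\<exists>c\<in>P. x \<in> c \<and> y \<in> c)"

definition fiber_partition :: "'a set \<Rightarrow> ('a \<Rightarrow> 'b) \<Rightarrow> 'a set set" where
  "fiber_partition X f = (\<lambda>x. {y\<in>X. f x = f y}) ` X"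

lemma same_block_sym: "same_block P x y \<Longrightarrow> same_block P y x"
  unfolding same_block_def by blast

lemma same_block_refl: "partition_on X P \<Longrightarrow> x \<in> X \<Longrightarrow> same_block P x x"
  unfolding same_block_def by (auto dest: partition_onD1)

lemma partition_on_block_unique:
  "partition_on X P \<Longrightarrow> c \<in> P \<Longrightarrow> d \<in> P \<Longrightarrow> x \<in> c \<Longrightarrow> x \<in> d \<Longrightarrow> c = d"
  using partition_onD2 unfolding disjoint_def by blast

lemma same_block_trans:
  assumes P: "partition_on X P" and "same_block P x y" "same_block P y z"
  shows "same_block P x z"
proof -
  obtain c d where cd: "c \<in> P" "x \<in> c" "y \<in> c" "d \<in> P" "y \<in> d" "z \<in> d"
    using assms(2,3) unfolding same_block_def by blast
  then have "c = d"
    using partition_on_block_unique[OF P] by blast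
  with cd show ?thesis
    unfolding same_block_def by blast
qed

lemma same_block_in_carrier: "partition_on X P \<Longrightarrow> same_block P x y \<Longrightarrow> x \<in> X \<and> y \<in> X"
  unfolding same_block_def by (auto dest: partition_onD1)

lemma partition_eq_fiber_partition:
  assumes P: "partition_on X P"
    and iff: "\<And>x y. x \<in> X \<Longrightarrow> y \<in> X \<Longrightarrow> same_block P x y \<longleftrightarrow> f x = f y"
  shows "P = fiber_partition X f"
proof -
  have rel: "{(x, y). \<exists>p\<in>P. x \<in> p \<and> y \<in> p} = {(x, y). x \<in> X \<and> y \<in> X \<and> f x = f y}"
    using iff same_block_in_carrier[OF P] unfolding same_block_def by blast
  have "P = X // {(x, y). x \<in> X \<and> y \<in> X \<and> f x = f y}"
    using partition_on_eq_quotient[OF P] unfolding rel ..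
  also have "\<dots> = fiber_partition X f"
    unfolding quotient_def fiber_partition_def by auto
  finally show ?thesis .
qed

lemma partition_eq_fiber_partition_by_representatives:
  fixes f :: "'a \<Rightarrow> 'b::linorder"
  assumes P: "partition_on X P"
    and rep: "\<And>x. x \<in> X \<Longrightarrow> same_block P x (r (f x))"
    and range: "f ` X \<subseteq> V"
    and separated: "\<And>v w. v \<in> V \<Longrightarrow> w \<in> V \<Longrightarrow> v < w \<Longrightarrow> \<not> same_block P (r v) (r w)"
  shows "P = fiber_partition X f"
proof (rule partition_eq_fiber_partition[OF P])
  fix x y assume x: "x \<in> X" and y: "y \<in> X"
  have rx: "same_block P x (r (f x))" and ry: "same_block P y (r (f y))"
    using rep x y by auto
  have V: "f x \<in> V" "f y \<in> V"
    using range x y by auto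
  show "same_block P x y \<longleftrightarrow> f x = f y"
  proof
    assume "same_block P x y"
    then have "same_block P (r (f x)) y"
      using same_block_trans[OF P same_block_sym[OF rx]] by blast
    then have reps: "same_block P (r (f x)) (r (f y))"
      using same_block_trans[OF P _ ry] by blast
    show "f x = f y"
    proof (rule ccontr)
      assume "f x \<noteq> f y"
      then show False
      proof (rule linorder_neqE)
        assume "f x < f y"
        then show False
          using separated[OF V] reps by blast
      next
        assume "f y < f x"
        then show False
          using separated[OF V(2,1)] same_block_sym[OF reps] by blast
      qed
    qed
  next
    assume "f x = f y"
    with ry have "same_block P (r (f x)) y"
      using same_block_sym by simp
    then show "same_block P x y"
      using same_block_trans[OF P rx] by blast
  qed
qed

lemma partition_on_fiber_partition: "partition_on X (fiber_partition X f)"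
  unfolding fiber_partition_def by (rule partition_onI) (auto simp: disjnt_def)

lemma card_fiber_partition: "card (fiber_partition X f) = card (f ` X)"
proof -
  have "fiber_partition X f = (\<lambda>v. {y\<in>X. v = f y}) ` f ` X"
    unfolding fiber_partition_def by (simp add: image_image)
  moreover have "inj_on (\<lambda>v. {y\<in>X. v = f y}) (f ` X)"
    by (rule inj_onI) blast
  ultimately show ?thesis
    by (simp add: card_image)
qed

lemma strict_coloring_fiber_partition:
  assumes C: "\<And>e. e \<in> C \<Longrightarrow> e \<subseteq> X \<and> (\<exists>x\<in>e. \<exists>y\<in>e. x \<noteq> y \<and> f x = f y)"
    and D: "\<And>e. e \<in> D \<Longrightarrow> e \<subseteq> X \<and> (\<exists>x\<in>e. \<exists>y\<in>e. f x \<noteq> f y)"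
  shows "strict_coloring X C D (fiber_partition X f)"
proof -
  have C': "\<exists>c\<in>fiber_partition X f. \<exists>x\<in>e. \<exists>y\<in>e. x \<noteq> y \<and> x \<in> c \<and> y \<in> c"
    if e: "e \<in> C" for e
  proof -
    obtain x y where xy: "x \<in> e" "y \<in> e" "x \<noteq> y" "f x = f y" and "e \<subseteq> X"
      using C[OF e] by blast
    define c where "c = {z\<in>X. f x = f z}"
    have "c \<in> fiber_partition X f" "x \<in> c" "y \<in> c"
      using xy \<open>e \<subseteq> X\<close> unfolding c_def fiber_partition_def by auto
    with xy(1-3) show ?thesis
      by blast
  qed
  have D': "\<exists>c\<in>fiber_partition X f. \<exists>x\<in>e. \<exists>y\<in>e. x \<in> c \<and> y \<notin> c" if e: "e \<in> D" for e
  proof -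
    obtain x y where xy: "x \<in> e" "y \<in> e" "f x \<noteq> f y" and "e \<subseteq> X"
      using D[OF e] by blast
    define c where "c = {z\<in>X. f x = f z}"
    have "c \<in> fiber_partition X f" "x \<in> c" "y \<notin> c"
      using xy \<open>e \<subseteq> X\<close> unfolding c_def fiber_partition_def by auto
    with xy(1,2) show ?thesis
      by blast
  qed
  show ?thesis
    unfolding strict_coloring_def using partition_on_fiber_partition C' D' by blast
qed

lemma not_inj_on_if_card_image_less:
  assumes "card (f ` e) < card e"
  shows "\<exists>x\<in>e. \<exists>y\<in>e. x \<noteq> y \<and> f x = f y"
proof (rule ccontr)
  assume "\<not> ?thesis"
  then have "inj_on f e"
    unfolding inj_on_def by blast
  with assms show False
    using card_image by fastforce
qed

lemma not_constant_on_if_card_image_ge_2: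
  assumes "2 \<le> card (f ` e)"
  shows "\<exists>x\<in>e. \<exists>y\<in>e. f x \<noteq> f y"
proof (rule ccontr)
  assume const: "\<not> ?thesis"
  have "e \<noteq> {}"
    using assms by (intro notI) simp
  then obtain x where "x \<in> e"
    by blast
  with const have "f ` e \<subseteq> {f x}"
    by blast
  then have "card (f ` e) \<le> 1"
    using card_mono[of "{f x}"] by simp
  with assms show False
    by simp
qed

lemma strict_coloringD:
  assumes "strict_coloring X C D P"
  shows "partition_on X P"
    and "e \<in> C \<Longrightarrow> \<exists>c\<in>P. \<exists>x\<in>e. \<exists>y\<in>e. x \<noteq> y \<and> x \<in> c \<and> y \<in> c"
    and "e \<in> D \<Longrightarrow> \<exists>c\<in>P. \<exists>x\<in>e. \<exists>y\<in>e. x \<in> c \<and> y \<notin> c"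
  using assms unfolding strict_coloring_def by blast+

lemma strict_coloring_edge_has_pair:
  assumes "strict_coloring X C D P" and "{x, y, z} \<in> C"
  shows "same_block P x y \<or> same_block P x z \<or> same_block P y z"
  using strict_coloringD(2)[OF assms] unfolding same_block_def by blast

lemma strict_coloring_bi_edge_pair_unique:
  assumes col: "strict_coloring X B B P" and edge: "{x, y, z} \<in> B"
    and xy: "same_block P x y"
  shows "\<not> same_block P x z"
proof
  assume xz: "same_block P x z"
  have part: "partition_on X P"
    using strict_coloringD(1)[OF col] .
  obtain c where c: "c \<in> P" "x \<in> c" "y \<in> c"
    using xy unfolding same_block_def by blast
  obtain c' where c': "c' \<in> P" "x \<in> c'" "z \<in> c'"
    using xz unfolding same_block_def by blast
  have xyz: "{x, y, z} \<subseteq> c"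
    using c c' partition_on_block_unique[OF part c(1) c'(1)] by blast
  obtain d u w where d: "d \<in> P" "u \<in> {x, y, z}" "w \<in> {x, y, z}" "u \<in> d" "w \<notin> d"
    using strict_coloringD(3)[OF col edge] by blast
  have "d = c"
    using partition_on_block_unique[OF part d(1) c(1) d(4)] d(2) xyz by blast
  with d(3,5) xyz show False
    by blast
qed

lemma strict_coloring_bi_pair_transfer:
  assumes col: "strict_coloring X B B P"
    and edges: "{p', q', p} \<in> B" "{p', q', q} \<in> B" "{p, q, p'} \<in> B"
    and same: "same_block P p' q'"
  shows "same_block P p q"
proof -
  have "\<not> same_block P p p'" "\<not> same_block P q p'"
    using strict_coloring_bi_edge_pair_unique[OF col edges(1) same]
      strict_coloring_bi_edge_pair_unique[OF col edges(2) same]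
    by (metis same_block_sym)+
  then show ?thesis
    using strict_coloring_edge_has_pair[OF col edges(3)] by blast
qed

lemma one_realization_if_inj_on_card:
  assumes "inj_on card {P. strict_coloring X C D P}"
  shows "one_realization (card ` {P. strict_coloring X C D P}) X C D"
proof -
  have "spectrum_entry X C D k \<in> {0, 1}" for k
  proof -
    let ?S = "{P. strict_coloring X C D P \<and> card P = k}"
    have "\<forall>P\<in>?S. \<forall>Q\<in>?S. P = Q"
      using assms unfolding inj_on_def by auto
    then have "card ?S \<le> 1"
      using card_le_Suc0_iff_eq[of ?S] card.infinite[of ?S] by (cases "finite ?S") auto
    then show ?thesis
      unfolding spectrum_entry_def by auto
  qed
  moreover have "feasible_set X C D = card ` {P. strict_coloring X C D P}"
    unfolding feasible_set_def by auto
  ultimately show ?thesis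
    unfolding one_realization_def by simp
qed

locale H_hypergraph =
  fixes n1 n2 n3 :: nat
  assumes n2_less_n1: "n2 < n1" and n3_less_n2: "n3 < n2" and two_le_n3: "2 \<le> n3"
begin

abbreviation X :: "vec4 set" where "X \<equiv> HX n1 n2 n3"
abbreviation B :: "vec4 set set" where "B \<equiv> HB n1 n2 n3"

lemmas n_order = n2_less_n1 n3_less_n2 two_le_n3

text \<open>The vertex families, indexed by their first coordinate instead of the offset k. Two
  coincidences matter below: c n3 is the vertex (n3,n3,1,0) of the extra edge, and d n3 = b n3.\<close>

abbreviation a :: "nat \<Rightarrow> vec4" where "a j \<equiv> (j, j, j, 0)"
abbreviation b :: "nat \<Rightarrow> vec4" where "b j \<equiv> (j, j, j, 1)"
abbreviation c :: "nat \<Rightarrow> vec4" where "c v \<equiv> (v, v, 1, 0)"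
abbreviation d :: "nat \<Rightarrow> vec4" where "d v \<equiv> (v, v, n3, 1)"
abbreviation e :: "nat \<Rightarrow> vec4" where "e v \<equiv> (v, 1, 1, 0)"
abbreviation f :: "nat \<Rightarrow> vec4" where "f v \<equiv> (v, n2, n3, 1)"
abbreviation g :: vec4 where "g \<equiv> (n1, n2, n3, 1)"

lemma X_cases:
  assumes "x \<in> X"
  obtains (a) j where "1 \<le> j" "j \<le> n3" "x = a j"
    | (b) j where "1 \<le> j" "j \<le> n3" "x = b j"
    | (c) v where "n3 \<le> v" "v < n2" "x = c v"
    | (d) v where "n3 \<le> v" "v < n2" "x = d v"
    | (e) v where "n2 \<le> v" "v < n1" "x = e v"
    | (f) v where "n2 \<le> v" "v < n1" "x = f v"
    | (g) "x = g"
proof -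
  from assms consider (a') j where "1 \<le> j" "j \<le> n3" "x = a j"
    | (b') j where "1 \<le> j" "j \<le> n3" "x = b j"
    | (c') k where "k < n2 - n3" "x = c (n3 + k)"
    | (d') k where "k < n2 - n3" "x = d (n3 + k)"
    | (e') k where "k < n1 - n2" "x = e (n2 + k)"
    | (f') k where "k < n1 - n2" "x = f (n2 + k)"
    | (g') "x = g"
    unfolding HX_def by auto
  then show thesis
  proof cases
    case (c' k)
    then show thesis
      by (intro c[of "n3 + k"]) auto
  next
    case (d' k)
    then show thesis
      by (intro d[of "n3 + k"]) auto
  next
    case (e' k)
    then show thesis
      by (intro e[of "n2 + k"]) auto
  next
    case (f' k)
    then show thesis
      by (intro f[of "n2 + k"]) auto
  qed (use a b g in auto)
qed

lemma a_mem: "1 \<le> j \<Longrightarrow> j \<le> n3 \<Longrightarrow> a j \<in> X"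
  and b_mem: "1 \<le> j \<Longrightarrow> j \<le> n3 \<Longrightarrow> b j \<in> X"
  and g_mem: "g \<in> X"
  unfolding HX_def by auto

lemma c_mem: "n3 \<le> v \<Longrightarrow> v < n2 \<Longrightarrow> c v \<in> X"
  and d_mem: "n3 \<le> v \<Longrightarrow> v < n2 \<Longrightarrow> d v \<in> X"
  unfolding HX_def by (auto intro!: exI[of _ "v - n3"])

lemma e_mem: "n2 \<le> v \<Longrightarrow> v < n1 \<Longrightarrow> e v \<in> X"
  and f_mem: "n2 \<le> v \<Longrightarrow> v < n1 \<Longrightarrow> f v \<in> X"
  unfolding HX_def by (auto intro!: exI[of _ "v - n2"])

lemmas vertex_mem = a_mem b_mem c_mem d_mem e_mem f_mem g_mem

lemma HB_edgeI:
  assumes "x \<in> X" "y \<in> X" "z \<in> X" "x \<noteq> y" "x \<noteq> z" "y \<noteq> z"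
    and "\<And>j. j \<in> {1, 2, 3, 4} \<Longrightarrow> card {coord x j, coord y j, coord z j} = 2"
  shows "{x, y, z} \<in> B"
proof -
  have "{1..4::nat} = {1, 2, 3, 4}"
    by auto
  with assms show ?thesis
    unfolding HB_def by auto
qed


lemma last_coord_HX: "x \<in> X \<Longrightarrow> coord x 4 \<in> {0, 1}"
  by (auto elim: X_cases)

lemma a_b_edge:
  assumes "1 \<le> j" "j \<le> n3" "y \<in> X" "coord y 1 \<noteq> j" "coord y 2 \<noteq> j" "coord y 3 \<noteq> j"
  shows "{a j, b j, y} \<in> B"
proof -
  obtain y1 y2 y3 y4 where y: "y = (y1, y2, y3, y4)"
    by (cases y) auto
  show ?thesis
    using assms last_coord_HX[OF assms(3)] unfolding y
    by (intro HB_edgeI vertex_mem) (auto simp: card_insert_if)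
qed

lemma c_d_edge:
  assumes "n3 \<le> v" "v < n2" "y \<in> X" "coord y 1 \<noteq> v" "coord y 2 \<noteq> v" "coord y 3 \<in> {1, n3}"
  shows "{c v, d v, y} \<in> B"
proof -
  obtain y1 y2 y3 y4 where y: "y = (y1, y2, y3, y4)"
    by (cases y) auto
  show ?thesis
    using assms last_coord_HX[OF assms(3)] two_le_n3 unfolding y
    by (intro HB_edgeI vertex_mem) (auto simp: card_insert_if)
qed

lemma e_f_edge:
  assumes "n2 \<le> v" "v < n1" "y \<in> X" "coord y 1 \<noteq> v" "coord y 2 \<in> {1, n2}" "coord y 3 \<in> {1, n3}"
  shows "{e v, f v, y} \<in> B"
proof -
  obtain y1 y2 y3 y4 where y: "y = (y1, y2, y3, y4)"
    by (cases y) auto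
  show ?thesis
    using assms last_coord_HX[OF assms(3)] n_order unfolding y
    by (intro HB_edgeI vertex_mem) (auto simp: card_insert_if)
qed

lemma a_c_edge:
  assumes "y \<in> X" "coord y 1 \<noteq> n3" "coord y 2 \<noteq> n3" "coord y 3 \<in> {1, n3}" "coord y 4 = 1"
  shows "{a n3, c n3, y} \<in> B"
proof -
  obtain y1 y2 y3 y4 where y: "y = (y1, y2, y3, y4)"
    by (cases y) auto
  show ?thesis
    using assms n_order unfolding y
    by (intro HB_edgeI vertex_mem) (auto simp: card_insert_if)
qed

lemma extra_edge: "{a 1, c n3, a n3} \<in> B"
  unfolding HB_def by blast

lemma far_vertex_coords:
  assumes "x \<in> X" "n3 < coord x 1"
  shows "coord x 2 \<noteq> n3" and "coord x 3 = 1 \<or> coord x 3 = n3 \<and> coord x 2 \<noteq> 1"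
  using assms(2) n_order by (cases rule: X_cases[OF assms(1)]; simp)+

lemma low_vertex_coord2:
  assumes "x \<in> X" "coord x 1 < n2"
  shows "coord x 2 = coord x 1"
  using assms(2) n_order by (cases rule: X_cases[OF assms(1)]) simp_all

definition coord2_rep :: "nat \<Rightarrow> vec4" where
  "coord2_rep v = (if v \<le> n3 then a v else if v < n2 then c v else g)"

definition coord1_rep :: "nat \<Rightarrow> vec4" where
  "coord1_rep v = (if v < n2 then coord2_rep v else if v < n1 then e v else g)"

lemma coord2_rep_mem: "v \<in> {1..n2} \<Longrightarrow> coord2_rep v \<in> X \<and> coord (coord2_rep v) 2 = v"
  using n_order vertex_mem unfolding coord2_rep_def by auto

lemma coord1_rep_mem: "v \<in> {1..n1} \<Longrightarrow> coord1_rep v \<in> X \<and> coord (coord1_rep v) 1 = v"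
  using n_order vertex_mem unfolding coord1_rep_def coord2_rep_def by auto

lemma coord_image_HX:
  "(\<lambda>x. coord x 1) ` X = {1..n1}"
  "(\<lambda>x. coord x 2) ` X = {1..n2}"
  "(\<lambda>x. coord x 3) ` X = {1..n3}"
proof -
  have "(\<lambda>x. coord x 1) ` X \<subseteq> {1..n1}" "(\<lambda>x. coord x 2) ` X \<subseteq> {1..n2}"
    "(\<lambda>x. coord x 3) ` X \<subseteq> {1..n3}"
    using n_order by (auto elim: X_cases)
  moreover have "{1..n1} \<subseteq> (\<lambda>x. coord x 1) ` X"
    using coord1_rep_mem by (metis (no_types, lifting) image_eqI subsetI)
  moreover have "{1..n2} \<subseteq> (\<lambda>x. coord x 2) ` X"
    using coord2_rep_mem by (metis (no_types, lifting) image_eqI subsetI)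
  moreover have "{1..n3} \<subseteq> (\<lambda>x. coord x 3) ` X"
    using a_mem by force
  ultimately show
    "(\<lambda>x. coord x 1) ` X = {1..n1}"
    "(\<lambda>x. coord x 2) ` X = {1..n2}"
    "(\<lambda>x. coord x 3) ` X = {1..n3}"
    by blast+
qed

abbreviation coord_partition :: "nat \<Rightarrow> vec4 set set" where
  "coord_partition m \<equiv> fiber_partition X (\<lambda>x. coord x m)"

text \<open>The extra edge is constant in the last coordinate, so only coordinates 1 to 3 qualify.\<close>

lemma HB_coord_card:
  assumes "E \<in> B" "m \<in> {1, 2, 3}"
  shows "E \<subseteq> X \<and> card E = 3 \<and> card ((\<lambda>x. coord x m) ` E) = 2"
  using assms n_order vertex_mem unfolding HB_def by (auto simp: card_insert_if)

lemma coord_partition_strict_coloring: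
  assumes "m \<in> {1, 2, 3}"
  shows "strict_coloring X B B (coord_partition m)"
proof (rule strict_coloring_fiber_partition)
  fix E assume "E \<in> B"
  then have E: "E \<subseteq> X" "card E = 3" "card ((\<lambda>x. coord x m) ` E) = 2"
    using HB_coord_card assms by blast+
  show "E \<subseteq> X \<and> (\<exists>x\<in>E. \<exists>y\<in>E. x \<noteq> y \<and> coord x m = coord y m)"
    using E not_inj_on_if_card_image_less[of "\<lambda>x. coord x m" E] by simp
  show "E \<subseteq> X \<and> (\<exists>x\<in>E. \<exists>y\<in>E. coord x m \<noteq> coord y m)"
    using E not_constant_on_if_card_image_ge_2[of "\<lambda>x. coord x m" E] by simp
qed

end

locale H_strict_coloring = H_hypergraph +
  fixes P :: "vec4 set set"
  assumes coloring: "strict_coloring X B B P"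
begin

abbreviation same :: "vec4 \<Rightarrow> vec4 \<Rightarrow> bool" (infix "\<approx>" 50) where
  "x \<approx> y \<equiv> same_block P x y"

lemma partition: "partition_on X P"
  using strict_coloringD(1)[OF coloring] .

lemma same_sym: "x \<approx> y \<Longrightarrow> y \<approx> x"
  by (fact same_block_sym)

lemma same_trans: "x \<approx> y \<Longrightarrow> y \<approx> z \<Longrightarrow> x \<approx> z"
  by (rule same_block_trans[OF partition])

lemma same_refl: "x \<in> X \<Longrightarrow> x \<approx> x"
  by (rule same_block_refl[OF partition])

lemma edge_separates:
  assumes "{x, y, z} \<in> B" "x \<approx> y"
  shows "\<not> x \<approx> z" "\<not> y \<approx> z"
proof -
  show "\<not> x \<approx> z"
    using strict_coloring_bi_edge_pair_unique[OF coloring assms] .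
  have "{y, x, z} \<in> B"
    using assms(1) by (simp add: insert_commute)
  then show "\<not> y \<approx> z"
    by (rule strict_coloring_bi_edge_pair_unique[OF coloring _ same_sym[OF assms(2)]])
qed

lemma edge_joins: "{x, y, z} \<in> B \<Longrightarrow> \<not> x \<approx> z \<Longrightarrow> \<not> y \<approx> z \<Longrightarrow> x \<approx> y"
  using strict_coloring_edge_has_pair[OF coloring] by blast

lemma a_same_b_transfer:
  assumes "1 \<le> i" "i \<le> n3" "1 \<le> j" "j \<le> n3" "i \<noteq> j" "a j \<approx> b j"
  shows "a i \<approx> b i"
proof (rule strict_coloring_bi_pair_transfer[OF coloring _ _ _ assms(6)])
  show "{a j, b j, a i} \<in> B" "{a j, b j, b i} \<in> B" "{a i, b i, a j} \<in> B"
    using assms n_order by (intro a_b_edge vertex_mem; simp)+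
qed

lemma a1_same_b1: "a 1 \<approx> b 1"
proof (rule ccontr)
  assume not1: "\<not> a 1 \<approx> b 1"
  have notn: "\<not> a n3 \<approx> b n3"
    using a_same_b_transfer[of 1 n3] not1 n_order by auto
  have ab: "{a 1, b 1, a n3} \<in> B" "{a 1, b 1, b n3} \<in> B"
    and cb: "{c n3, b n3, a 1} \<in> B" "{c n3, b n3, b 1} \<in> B"
    and ac: "{a n3, c n3, b 1} \<in> B"
    using n_order by (intro a_b_edge c_d_edge a_c_edge vertex_mem; simp)+
  have "a 1 \<approx> a n3 \<or> b 1 \<approx> a n3"
    using strict_coloring_edge_has_pair[OF coloring ab(1)] not1 by blast
  then show False
  proof
    assume a1_an: "a 1 \<approx> a n3"
    have edges: "{b 1, b n3, a 1} \<in> B" "{b 1, b n3, c n3} \<in> B" "{a 1, a n3, c n3} \<in> B"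
      using ab(2) cb(2) extra_edge by (simp_all add: insert_commute)
    have "\<not> b n3 \<approx> a 1"
      using notn same_trans[OF same_sym[OF a1_an]] same_sym by blast
    then have "b 1 \<approx> b n3"
      using edge_joins[OF edges(1)] not1 same_sym by blast
    then have "\<not> c n3 \<approx> b 1"
      using edge_separates(1)[OF edges(2)] same_sym by blast
    moreover have "\<not> a n3 \<approx> b 1"
      using not1 same_trans[OF a1_an] by blast
    ultimately have "a n3 \<approx> c n3"
      using edge_joins[OF ac] by blast
    then show False
      using edge_separates(2)[OF edges(3) a1_an] by blast
  next
    assume b1_an: "b 1 \<approx> a n3"
    have edges: "{a 1, b n3, b 1} \<in> B" "{a 1, b n3, c n3} \<in> B" "{c n3, a n3, a 1} \<in> B"
      using ab(2) cb(1) extra_edge by (simp_all add: insert_commute)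
    have "\<not> b n3 \<approx> b 1"
      using notn same_trans[OF _ b1_an] same_sym by blast
    then have "a 1 \<approx> b n3"
      using edge_joins[OF edges(1)] not1 by blast
    then have "\<not> c n3 \<approx> a 1"
      using edge_separates(1)[OF edges(2)] same_sym by blast
    moreover have "\<not> a n3 \<approx> a 1"
      using not1 same_trans[OF b1_an] same_sym by blast
    ultimately have "c n3 \<approx> a n3"
      using edge_joins[OF edges(3)] by blast
    then show False
      using edge_separates(1)[OF ac] b1_an same_sym by blast
  qed
qed

lemma a_same_b: "1 \<le> j \<Longrightarrow> j \<le> n3 \<Longrightarrow> a j \<approx> b j"
  using a_same_b_transfer[of j 1] a1_same_b1 n_order by (cases "j = 1") auto

lemma a_not_same_a:
  assumes "1 \<le> i" "i \<le> n3" "1 \<le> j" "j \<le> n3" "i \<noteq> j"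
  shows "\<not> a i \<approx> a j"
proof -
  have "{a i, b i, a j} \<in> B"
    using assms by (intro a_b_edge vertex_mem) auto
  then show ?thesis
    using edge_separates(1) a_same_b assms(1,2) by blast
qed

lemma not_same_a_if_avoids:
  assumes "x \<in> X" "1 \<le> j" "j \<le> n3" "coord x 1 \<noteq> j" "coord x 2 \<noteq> j" "coord x 3 \<noteq> j"
  shows "\<not> a j \<approx> x" "\<not> x \<approx> a j"
  using edge_separates(1)[OF a_b_edge[OF assms(2,3,1,4-6)] a_same_b[OF assms(2,3)]]
  by (auto dest: same_sym)

lemma a1_not_same_bn: "\<not> a 1 \<approx> b n3"
proof
  assume "a 1 \<approx> b n3"
  then have "a 1 \<approx> a n3"
    using same_trans same_sym[OF a_same_b[of n3]] n_order by simp
  then show False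
    using a_not_same_a[of 1 n3] n_order by simp
qed

lemma c_same_a1_or_an3: "c n3 \<approx> a 1 \<or> c n3 \<approx> a n3"
proof -
  have "{c n3, b n3, a 1} \<in> B"
    using n_order by (intro c_d_edge vertex_mem) simp_all
  then have "c n3 \<approx> a 1 \<or> c n3 \<approx> b n3"
    using strict_coloring_edge_has_pair[OF coloring] a1_not_same_bn same_sym by blast
  then show ?thesis
    using same_trans[OF _ same_sym[OF a_same_b[of n3]]] n_order by auto
qed

context
  assumes c_a1: "c n3 \<approx> a 1"
begin

lemma same_a_coord3_if_far:
  assumes x: "x \<in> X" "n3 < coord x 1"
  shows "x \<approx> a (coord x 3)"
proof -
  have an_bn: "a n3 \<approx> b n3"
    using a_same_b n_order by simp
  have "\<not> c n3 \<approx> b n3"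
    using a1_not_same_bn same_trans[OF same_sym[OF c_a1]] by blast
  moreover have "{c n3, b n3, x} \<in> B"
    using x far_vertex_coords[OF x] n_order by (intro c_d_edge) auto
  ultimately have c_or_b: "c n3 \<approx> x \<or> b n3 \<approx> x"
    using strict_coloring_edge_has_pair[OF coloring] by blast
  from far_vertex_coords(2)[OF x] show ?thesis
  proof
    assume x3: "coord x 3 = 1"
    then have "\<not> a n3 \<approx> x"
      using not_same_a_if_avoids[OF x(1)] far_vertex_coords(1)[OF x] x(2) n_order by simp
    then have "c n3 \<approx> x"
      using c_or_b same_trans[OF an_bn] by blast
    then show ?thesis
      using x3 same_sym same_trans[OF same_sym c_a1] by simp
  next
    assume x3: "coord x 3 = n3 \<and> coord x 2 \<noteq> 1"
    then have "\<not> a 1 \<approx> x"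
      using not_same_a_if_avoids[OF x(1)] x(2) n_order by simp
    then have "b n3 \<approx> x"
      using c_or_b same_trans[OF same_sym[OF c_a1]] by blast
    then show ?thesis
      using x3 same_sym same_trans[OF an_bn] by simp
  qed
qed

lemma same_a_coord3:
  assumes x: "x \<in> X"
  shows "x \<approx> a (coord x 3)"
proof (cases "n3 < coord x 1")
  case True
  then show ?thesis
    using same_a_coord3_if_far[OF x] by blast
next
  case False
  from x show ?thesis
  proof (cases rule: X_cases)
    case (a j)
    then show ?thesis
      using same_refl vertex_mem by simp
  next
    case (b j)
    then show ?thesis
      using same_sym[OF a_same_b] by simp
  next
    case (c v)
    then show ?thesis
      using False c_a1 by simp
  next
    case (d v)
    then show ?thesis
      using False same_sym[OF a_same_b[of n3]] n_order by simp
  qed (use False n_order in simp_all)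
qed

lemma coloring_eq_coord3_if_c_same_a1: "P = coord_partition 3"
proof (rule partition_eq_fiber_partition_by_representatives[OF partition])
  show "\<And>x. x \<in> X \<Longrightarrow> x \<approx> a (coord x 3)"
    using same_a_coord3 .
  show "(\<lambda>x. coord x 3) ` X \<subseteq> {1..n3}"
    using coord_image_HX(3) by simp
  show "\<And>v w. v \<in> {1..n3} \<Longrightarrow> w \<in> {1..n3} \<Longrightarrow> v < w \<Longrightarrow> \<not> a v \<approx> a w"
    using a_not_same_a by simp
qed

end

lemma e_same_f_transfer:
  assumes "n2 \<le> v" "v < n1" "n2 \<le> w" "w < n1" "e w \<approx> f w"
  shows "e v \<approx> f v"
proof (cases "v = w")
  case False
  show ?thesis
  proof (rule strict_coloring_bi_pair_transfer[OF coloring _ _ _ assms(5)])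
    show "{e w, f w, e v} \<in> B" "{e w, f w, f v} \<in> B" "{e v, f v, e w} \<in> B"
      using assms False n_order by (intro e_f_edge vertex_mem; simp)+
  qed
qed (use assms in simp)

lemma e_separated:
  assumes "e v \<approx> f v" "n2 \<le> v" "v < n1"
    and "y \<in> X" "coord y 1 \<noteq> v" "coord y 2 \<in> {1, n2}" "coord y 3 \<in> {1, n3}"
  shows "\<not> e v \<approx> y" "\<not> y \<approx> e v"
  using edge_separates(1)[OF e_f_edge[OF assms(2-7)] assms(1)]
  by (auto dest: same_sym)

lemma e_same_a1_if_not_same_f:
  assumes "\<not> e v \<approx> f v" "n2 \<le> v" "v < n1"
  shows "e v \<approx> a 1"
proof -
  have "{e v, f v, a 1} \<in> B"
    using assms n_order by (intro e_f_edge vertex_mem) auto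
  moreover have "\<not> f v \<approx> a 1"
    using not_same_a_if_avoids[of "f v" 1] f_mem assms n_order by auto
  ultimately show ?thesis
    using strict_coloring_edge_has_pair[OF coloring] assms(1) by blast
qed

lemma f_same_g_if_not_same_e:
  assumes "\<not> e v \<approx> f v" "n2 \<le> v" "v < n1"
  shows "f v \<approx> g"
proof -
  have "{e v, f v, g} \<in> B"
    using assms n_order by (intro e_f_edge vertex_mem) auto
  moreover have "\<not> a 1 \<approx> g"
    using not_same_a_if_avoids[of g 1] g_mem n_order by auto
  then have "\<not> e v \<approx> g"
    using same_trans[OF same_sym[OF e_same_a1_if_not_same_f[OF assms]]] by blast
  ultimately show ?thesis
    using strict_coloring_edge_has_pair[OF coloring] assms(1) by blast
qed

context
  assumes c_an: "c n3 \<approx> a n3"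
begin

lemma c_same_d:
  assumes v: "n3 \<le> v" "v < n2"
  shows "c v \<approx> d v"
proof (cases "v = n3")
  case True
  then show ?thesis
    using same_trans[OF c_an a_same_b[of n3]] n_order by simp
next
  case False
  with v have v': "n3 < v"
    by simp
  show ?thesis
  proof (rule ccontr)
    assume not_cd: "\<not> c v \<approx> d v"
    have "{c v, d v, a n3} \<in> B"
      using v v' n_order by (intro c_d_edge vertex_mem) auto
    moreover have "\<not> c v \<approx> a n3"
      using not_same_a_if_avoids[of "c v" n3] c_mem v v' n_order by auto
    ultimately have "d v \<approx> a n3"
      using strict_coloring_edge_has_pair[OF coloring] not_cd by blast
    moreover have "{a n3, c n3, d v} \<in> B"
      using v v' n_order by (intro a_c_edge vertex_mem) auto
    then have "\<not> a n3 \<approx> d v"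
      using edge_separates(1) same_sym[OF c_an] by blast
    ultimately show False
      using same_sym by blast
  qed
qed

lemma c_separated:
  assumes "n3 \<le> v" "v < n2"
    and "y \<in> X" "coord y 1 \<noteq> v" "coord y 2 \<noteq> v" "coord y 3 \<in> {1, n3}"
  shows "\<not> c v \<approx> y" "\<not> y \<approx> c v"
  using edge_separates(1)[OF c_d_edge[OF assms] c_same_d[OF assms(1,2)]]
  by (auto dest: same_sym)

lemma same_coord2_rep_if_low:
  assumes x: "x \<in> X" "coord x 1 < n2"
  shows "x \<approx> coord2_rep (coord x 1)"
  using x(1)
proof (cases rule: X_cases)
  case (a j)
  then show ?thesis
    using same_refl vertex_mem unfolding coord2_rep_def by simp
next
  case (b j)
  then show ?thesis
    using same_sym[OF a_same_b] unfolding coord2_rep_def by simp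
next
  case (c v)
  then show ?thesis
    using c_an same_refl[OF c_mem] unfolding coord2_rep_def by auto
next
  case (d v)
  then show ?thesis
    using same_sym[OF a_same_b[of n3]] same_sym[OF c_same_d] n_order
    unfolding coord2_rep_def by auto
qed (use x(2) n_order in simp_all)

lemma coord2_rep_separated:
  assumes vw: "v \<in> {1..n2}" "w \<in> {1..n2}" "v < w"
  shows "\<not> coord2_rep v \<approx> coord2_rep w"
proof -
  consider "w \<le> n3" | "v \<le> n3" "n3 < w" "w < n2" | "v \<le> n3" "w = n2"
    | "n3 < v" "w < n2" | "n3 < v" "v < n2" "w = n2"
    using vw by fastforce
  then show ?thesis
  proof cases
    case 1
    then show ?thesis
      using a_not_same_a[of v w] vw unfolding coord2_rep_def by simp
  next
    case 2
    have "\<not> a v \<approx> c w"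
    proof (cases "v = 1")
      case True
      then show ?thesis
        using c_separated[of w "a 1"] a_mem 2 n_order by auto
    next
      case False
      then show ?thesis
        using not_same_a_if_avoids[of "c w" v] c_mem 2 vw by auto
    qed
    with 2 show ?thesis
      unfolding coord2_rep_def by simp
  next
    case 3
    have "\<not> a v \<approx> g"
    proof (cases "v = n3")
      case True
      have "{a n3, c n3, g} \<in> B"
        using n_order by (intro a_c_edge vertex_mem) auto
      then show ?thesis
        using edge_separates(1) same_sym[OF c_an] True by blast
    next
      case False
      then show ?thesis
        using not_same_a_if_avoids[of g v] g_mem 3 vw n_order by auto
    qed
    with 3 n_order show ?thesis
      unfolding coord2_rep_def by simp
  next
    case 4
    then show ?thesis
      using c_separated[of v "c w"] c_mem vw n_order unfolding coord2_rep_def by auto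
  next
    case 5
    then show ?thesis
      using c_separated[of v g] g_mem n_order unfolding coord2_rep_def by auto
  qed
qed

context
  assumes ef: "e n2 \<approx> f n2"
begin

lemma e_same_f: "n2 \<le> v \<Longrightarrow> v < n1 \<Longrightarrow> e v \<approx> f v"
  using e_same_f_transfer[OF _ _ _ _ ef] n_order by simp

lemma same_coord1_rep:
  assumes x: "x \<in> X"
  shows "x \<approx> coord1_rep (coord x 1)"
proof (cases "coord x 1 < n2")
  case True
  then show ?thesis
    using same_coord2_rep_if_low[OF x True] unfolding coord1_rep_def by simp
next
  case False
  from x show ?thesis
  proof (cases rule: X_cases)
    case (e v)
    then show ?thesis
      using same_refl[OF e_mem] unfolding coord1_rep_def by simp
  next
    case (f v)
    then show ?thesis
      using same_sym[OF e_same_f] unfolding coord1_rep_def by simp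
  next
    case g
    then show ?thesis
      using same_refl[OF g_mem] n_order unfolding coord1_rep_def by simp
  qed (use False n_order in simp_all)
qed

lemma coord1_rep_separated:
  assumes vw: "v \<in> {1..n1}" "w \<in> {1..n1}" "v < w"
  shows "\<not> coord1_rep v \<approx> coord1_rep w"
proof -
  consider "w < n2" | "v < n2" "n2 \<le> w" "w < n1" | "v < n2" "w = n1"
    | "n2 \<le> v" "w < n1" | "n2 \<le> v" "v < n1" "w = n1"
    using vw by fastforce
  then show ?thesis
  proof cases
    case 1
    then show ?thesis
      using coord2_rep_separated[of v w] vw unfolding coord1_rep_def by simp
  next
    case 2
    have "\<not> coord2_rep v \<approx> e w"
    proof (cases "v \<le> n3")
      case True
      then show ?thesis
        using e_separated[OF e_same_f, of w "a 1"] not_same_a_if_avoids[of "e w" v] a_mem e_mem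
          2 vw n_order
        unfolding coord2_rep_def by (cases "v = 1") auto
    next
      case False
      then show ?thesis
        using c_separated[of v "e w"] e_mem 2 n_order unfolding coord2_rep_def by auto
    qed
    with 2 show ?thesis
      unfolding coord1_rep_def by simp
  next
    case 3
    then show ?thesis
      using coord2_rep_separated[of v n2] vw n_order unfolding coord1_rep_def
      by (simp add: coord2_rep_def)
  next
    case 4
    then show ?thesis
      using e_separated[OF e_same_f, of v "e w"] e_mem vw unfolding coord1_rep_def by auto
  next
    case 5
    then show ?thesis
      using e_separated[OF e_same_f, of v g] g_mem n_order unfolding coord1_rep_def by auto
  qed
qed

lemma coloring_eq_coord1_if_e_same_f: "P = coord_partition 1"
proof (rule partition_eq_fiber_partition_by_representatives[OF partition])
  show "\<And>x. x \<in> X \<Longrightarrow> x \<approx> coord1_rep (coord x 1)"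
    using same_coord1_rep .
  show "(\<lambda>x. coord x 1) ` X \<subseteq> {1..n1}"
    using coord_image_HX(1) by simp
  show "\<And>v w. v \<in> {1..n1} \<Longrightarrow> w \<in> {1..n1} \<Longrightarrow> v < w \<Longrightarrow>
      \<not> coord1_rep v \<approx> coord1_rep w"
    using coord1_rep_separated .
qed

end

context
  assumes not_ef: "\<not> e n2 \<approx> f n2"
begin

lemma e_not_same_f: "n2 \<le> v \<Longrightarrow> v < n1 \<Longrightarrow> \<not> e v \<approx> f v"
  using e_same_f_transfer[of n2 v] not_ef n_order by auto

lemma same_coord2_rep:
  assumes x: "x \<in> X"
  shows "x \<approx> coord2_rep (coord x 2)"
proof (cases "coord x 1 < n2")
  case True
  then show ?thesis
    using same_coord2_rep_if_low[OF x True] low_vertex_coord2[OF x True] by simp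
next
  case False
  from x show ?thesis
  proof (cases rule: X_cases)
    case (e v)
    then show ?thesis
      using e_same_a1_if_not_same_f[OF e_not_same_f] n_order unfolding coord2_rep_def by simp
  next
    case (f v)
    then show ?thesis
      using f_same_g_if_not_same_e[OF e_not_same_f] n_order unfolding coord2_rep_def by simp
  next
    case g
    then show ?thesis
      using same_refl[OF g_mem] n_order unfolding coord2_rep_def by simp
  qed (use False n_order in simp_all)
qed

lemma coloring_eq_coord2_if_e_not_same_f: "P = coord_partition 2"
proof (rule partition_eq_fiber_partition_by_representatives[OF partition])
  show "\<And>x. x \<in> X \<Longrightarrow> x \<approx> coord2_rep (coord x 2)"
    using same_coord2_rep .
  show "(\<lambda>x. coord x 2) ` X \<subseteq> {1..n2}"
    using coord_image_HX(2) by simp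
  show "\<And>v w. v \<in> {1..n2} \<Longrightarrow> w \<in> {1..n2} \<Longrightarrow> v < w \<Longrightarrow>
      \<not> coord2_rep v \<approx> coord2_rep w"
    using coord2_rep_separated .
qed

end

end

lemma coloring_eq_coord_partition: "\<exists>m\<in>{1, 2, 3}. P = coord_partition m"
proof (cases "c n3 \<approx> a 1")
  case True
  then show ?thesis
    using coloring_eq_coord3_if_c_same_a1 by blast
next
  case False
  then have "c n3 \<approx> a n3"
    using c_same_a1_or_an3 by blast
  then show ?thesis
    using coloring_eq_coord1_if_e_same_f coloring_eq_coord2_if_e_not_same_f by blast
qed

end

context H_hypergraph
begin

lemma strict_colorings_HX: "{P. strict_coloring X B B P} = coord_partition ` {1, 2, 3}"
proof
  show "{P. strict_coloring X B B P} \<subseteq> coord_partition ` {1, 2, 3}"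
  proof
    fix P assume "P \<in> {P. strict_coloring X B B P}"
    then interpret H_strict_coloring n1 n2 n3 P
      by unfold_locales simp
    show "P \<in> coord_partition ` {1, 2, 3}"
      using coloring_eq_coord_partition by blast
  qed
  show "coord_partition ` {1, 2, 3} \<subseteq> {P. strict_coloring X B B P}"
    using coord_partition_strict_coloring by blast
qed

lemma card_coord_partition:
  "card (coord_partition 1) = n1" "card (coord_partition 2) = n2" "card (coord_partition 3) = n3"
  using coord_image_HX by (simp_all add: card_fiber_partition)

end

theorem lemma2p3:
  fixes n1 n2 n3 :: nat
  assumes "n1 > n2" and "n2 > n3" and "n3 \<ge> 2"
  shows "one_realization {n1, n2, n3} (HX n1 n2 n3) (HB n1 n2 n3) (HB n1 n2 n3)"
proof -
  interpret H_hypergraph n1 n2 n3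
    using assms by unfold_locales
  have "inj_on card {P. strict_coloring X B B P}"
    using assms card_coord_partition unfolding strict_colorings_HX inj_on_def by auto
  moreover have "card ` {P. strict_coloring X B B P} = {n1, n2, n3}"
    using card_coord_partition unfolding strict_colorings_HX by auto
  ultimately show ?thesis
    using one_realization_if_inj_on_card by metis
qed

end
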